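(* Let $a(z,y)$ and $b(z,y)$ be polynomials in $z$ and $y$ with $a(z,0)=b(z,0)=1$, and let \[ G(z,y)=\frac{a(z,y)-b(z,y)\sqrt{1-2z^2-4yz^3}}{1+2yz}. \] Then: (a) for every $\ell\geq 1$ there are polynomials $c_\ell(z),d_\ell(z)$ such that \[ \frac{\partial^{\ell}}{\partial y^{\ell}}G(z,y)\Big\vert_{y=0}=\frac{c_{\ell}(z)-d_{\ell}(z)\sqrt{1-2z^2}}{(1-2z^2)^{\ell-1/2}}; \] (b) for every $\ell\geq 0$ there are polynomials $e_\ell(z),f_\ell(z)$ such that \[ \frac{\partial^{\ell}}{\partial y^{\ell}}\frac{1}{1-G(z,y)}\Big\vert_{y=0}=\frac{e_{\ell}(z)-f_{\ell}(z)\sqrt{1-2z^2}}{(1-2z^2)^{\ell+1/2}}. \]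
   Context: Here $\sqrt{\cdot}$ denotes the principal branch (equal to $1$ at $z=y=0$), and all functions are regarded as analytic functions near $(z,y)=(0,0)$. *)

theory Defs
  imports "HOL-Complex_Analysis.Complex_Analysis" "HOL-Computational_Algebra.Polynomial"
begin

text \<open>A bivariate polynomial p(z,y) is represented as a polynomial in y whose
coefficients are polynomials in z (type complex poly poly).\<close>
definition eval2 :: "complex poly poly \<Rightarrow> complex \<Rightarrow> complex \<Rightarrow> complex" where
  "eval2 p z y = poly (map_poly (\<lambda>q. poly q z) p) y"

definition GG :: "complex poly poly \<Rightarrow> complex poly poly \<Rightarrow> complex \<Rightarrow> complex \<Rightarrow> complex" where
  "GG a b z y = (eval2 a z y - eval2 b z y * csqrt (1 - 2*z^2 - 4*y*z^3)) / (1 + 2*y*z)"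

end

(*
  Let s = sqrt (1 - 2 z^2). Call a function of z an s-fraction of order n if near z = 0 it
  equals (e(z) + f(z) s) / s^n with polynomials e, f. Since s^2 is a polynomial, s-fractions
  of order n are also s-fractions of every order m >= n, and they form a ring in which orders
  add under multiplication; by the Leibniz rule, bounds on the orders of the y-derivatives at
  y = 0 are therefore inherited by sums and products of functions of (z, y).

  S = sqrt (1 - 2 z^2 - 4 y z^3), 1/S and 1/(1 + 2 y z) satisfy first-order equations in y,
  e.g. (1/S)' = 2 z^3 (1/S)^3, so induction on the number of derivatives bounds the order of
  their j-th derivatives by 2j - 1, 2j + 1 and 0; part (a) follows from G = (a - b S)/(1 + 2 y z).
  For part (b), 1/(1 - G) = (1 + 2 y z)/T with T = 1 + 2 y z - a + b S. The normalisation
  a(z,0) = b(z,0) = 1 gives T(z,0) = s, and (1/T)' = -T' (1/T)^2 yields order 2j + 1.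
*)

theory Submission
  imports Defs
begin

lemma eval2_diff: "eval2 (P - Q) z y = eval2 P z y - eval2 Q z y"
proof -
  have "map_poly (\<lambda>q. poly q z) (P - Q) = map_poly (\<lambda>q. poly q z) P - map_poly (\<lambda>q. poly q z) Q"
    by (rule poly_eqI) (simp add: coeff_map_poly)
  then show ?thesis by (simp add: eval2_def)
qed

lemma eval2_at_0: "eval2 P z 0 = poly (coeff P 0) z"
  by (simp add: eval2_def poly_0_coeff_0 coeff_map_poly)

lemma has_field_derivative_eval2:
  "((\<lambda>y. eval2 P z y) has_field_derivative eval2 (pderiv P) z y) (at y)"
proof -
  have "map_poly (\<lambda>q. poly q z) (pderiv P) = pderiv (map_poly (\<lambda>q. poly q z) P)"
    by (rule poly_eqI) (simp add: coeff_pderiv coeff_map_poly)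
  then show ?thesis by (simp add: eval2_def)
qed

lemma higher_deriv_eval2:
  "(deriv ^^ j) (\<lambda>y. eval2 P z y) = (\<lambda>y. eval2 ((pderiv ^^ j) P) z y)"
  by (induction j) (simp_all add: DERIV_imp_deriv[OF has_field_derivative_eval2])

lemma analytic_on_eval2: "(\<lambda>y. eval2 P z y) analytic_on S"
  using has_field_derivative_eval2
  by (meson analytic_on_open analytic_on_subset holomorphic_on_open open_UNIV subset_UNIV)

lemma eventually_nonzero_nhds:
  fixes f :: "'a::t2_space \<Rightarrow> 'b::{t1_space,zero}"
  assumes "isCont f x" "f x \<noteq> 0"
  shows "\<forall>\<^sub>F y in nhds x. f y \<noteq> 0"
  by (metis assms isContD tendsto_imp_eventually_ne tendsto_nhds_iff)

lemma analytic_at_if_eventually_has_derivative: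
  assumes "\<forall>\<^sub>F y in nhds x. (f has_field_derivative f' y) (at y)"
  shows "f analytic_on {x}"
proof -
  obtain S where "open S" "x \<in> S" "\<forall>y\<in>S. (f has_field_derivative f' y) (at y)"
    using assms unfolding eventually_nhds by blast
  then show ?thesis
    using analytic_at holomorphic_on_open by blast
qed

locale sqrt_of_poly =
  fixes w :: "complex poly"
  assumes poly_w_0: "poly w 0 \<noteq> 0"
begin

definition sqrt_w :: "complex \<Rightarrow> complex" where
  "sqrt_w z = csqrt (poly w z)"

definition sqrt_frac :: "nat \<Rightarrow> complex poly \<Rightarrow> complex poly \<Rightarrow> complex \<Rightarrow> complex" where
  "sqrt_frac n e f z = (poly e z + poly f z * sqrt_w z) / sqrt_w z ^ n"

definition sqrt_frac_near_0 :: "nat \<Rightarrow> (complex \<Rightarrow> complex) \<Rightarrow> bool" where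
  "sqrt_frac_near_0 n h \<longleftrightarrow> (\<exists>e f. \<forall>\<^sub>F z in nhds 0. h z = sqrt_frac n e f z)"

lemma sqrt_w_square: "sqrt_w z ^ 2 = poly w z"
  by (simp add: sqrt_w_def)

lemma eventually_sqrt_w_nonzero: "\<forall>\<^sub>F z in nhds 0. sqrt_w z \<noteq> 0"
proof -
  have "\<forall>\<^sub>F z in nhds 0. poly w z \<noteq> 0"
    using poly_w_0 by (intro eventually_nonzero_nhds) (auto intro: continuous_intros)
  then show ?thesis by (rule eventually_mono) (simp add: sqrt_w_def)
qed

lemma sqrt_frac_Suc:
  assumes "sqrt_w z \<noteq> 0"
  shows "sqrt_frac (Suc n) (f * w) e z = sqrt_frac n e f z"
  using assms by (simp add: sqrt_frac_def sqrt_w_square[symmetric] power2_eq_square field_simps)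

lemma sqrt_frac_raise:
  assumes "n \<le> m"
  shows "\<exists>e' f'. \<forall>z. sqrt_w z \<noteq> 0 \<longrightarrow> sqrt_frac n e f z = sqrt_frac m e' f' z"
  using assms
proof (induction m rule: dec_induct)
  case base
  then show ?case by blast
next
  case (step m)
  then show ?case by (metis sqrt_frac_Suc)
qed

lemma sqrt_frac_zero: "sqrt_frac n 0 0 z = 0"
  by (simp add: sqrt_frac_def)

lemma sqrt_frac_add:
  "sqrt_frac n e1 f1 z + sqrt_frac n e2 f2 z = sqrt_frac n (e1 + e2) (f1 + f2) z"
  by (simp add: sqrt_frac_def add_divide_distrib algebra_simps)

lemma sqrt_frac_mult:
  assumes "sqrt_w z \<noteq> 0"
  shows "sqrt_frac n1 e1 f1 z * sqrt_frac n2 e2 f2 z =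
    sqrt_frac (n1 + n2) (e1 * e2 + f1 * f2 * w) (e1 * f2 + e2 * f1) z"
  using assms by (simp add: sqrt_frac_def sqrt_w_square[symmetric] power_add power2_eq_square field_simps)

lemma sqrt_frac_near_0_cong:
  assumes "sqrt_frac_near_0 n g" "\<forall>\<^sub>F z in nhds 0. g z = h z"
  shows "sqrt_frac_near_0 n h"
proof -
  obtain e f where "\<forall>\<^sub>F z in nhds 0. g z = sqrt_frac n e f z"
    using assms(1) unfolding sqrt_frac_near_0_def by blast
  with assms(2) have "\<forall>\<^sub>F z in nhds 0. h z = sqrt_frac n e f z"
    by eventually_elim simp
  then show ?thesis unfolding sqrt_frac_near_0_def by blast
qed

lemma sqrt_frac_near_0_mono:
  assumes "sqrt_frac_near_0 n h" "n \<le> m"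
  shows "sqrt_frac_near_0 m h"
proof -
  obtain e f where h: "\<forall>\<^sub>F z in nhds 0. h z = sqrt_frac n e f z"
    using assms(1) unfolding sqrt_frac_near_0_def by blast
  obtain e' f' where raise: "\<forall>z. sqrt_w z \<noteq> 0 \<longrightarrow> sqrt_frac n e f z = sqrt_frac m e' f' z"
    using sqrt_frac_raise[OF assms(2)] by blast
  from h eventually_sqrt_w_nonzero have "\<forall>\<^sub>F z in nhds 0. h z = sqrt_frac m e' f' z"
    by eventually_elim (simp add: raise)
  then show ?thesis unfolding sqrt_frac_near_0_def by blast
qed

lemma sqrt_frac_near_0_poly: "sqrt_frac_near_0 n (poly p)"
proof -
  have "sqrt_frac_near_0 0 (poly p)"
    unfolding sqrt_frac_near_0_def by (rule exI[of _ p], rule exI[of _ 0]) (simp add: sqrt_frac_def)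
  then show ?thesis by (rule sqrt_frac_near_0_mono) simp
qed

lemma sqrt_frac_near_0_const: "sqrt_frac_near_0 0 (\<lambda>z. c)"
  unfolding sqrt_frac_near_0_def by (rule exI[of _ "[:c:]"], rule exI[of _ 0]) (simp add: sqrt_frac_def)

lemma sqrt_frac_near_0_add:
  assumes "sqrt_frac_near_0 n g" "sqrt_frac_near_0 n h"
  shows "sqrt_frac_near_0 n (\<lambda>z. g z + h z)"
proof -
  obtain e1 f1 e2 f2 where "\<forall>\<^sub>F z in nhds 0. g z = sqrt_frac n e1 f1 z"
    "\<forall>\<^sub>F z in nhds 0. h z = sqrt_frac n e2 f2 z"
    using assms unfolding sqrt_frac_near_0_def by blast
  then have "\<forall>\<^sub>F z in nhds 0. g z + h z = sqrt_frac n (e1 + e2) (f1 + f2) z"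
    by eventually_elim (simp add: sqrt_frac_add)
  then show ?thesis unfolding sqrt_frac_near_0_def by blast
qed

lemma sqrt_frac_near_0_mult:
  assumes "sqrt_frac_near_0 n1 g" "sqrt_frac_near_0 n2 h"
  shows "sqrt_frac_near_0 (n1 + n2) (\<lambda>z. g z * h z)"
proof -
  obtain e1 f1 e2 f2 where "\<forall>\<^sub>F z in nhds 0. g z = sqrt_frac n1 e1 f1 z"
    "\<forall>\<^sub>F z in nhds 0. h z = sqrt_frac n2 e2 f2 z"
    using assms unfolding sqrt_frac_near_0_def by blast
  with eventually_sqrt_w_nonzero have "\<forall>\<^sub>F z in nhds 0.
      g z * h z = sqrt_frac (n1 + n2) (e1 * e2 + f1 * f2 * w) (e1 * f2 + e2 * f1) z"
    by eventually_elim (simp add: sqrt_frac_mult)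
  then show ?thesis unfolding sqrt_frac_near_0_def by blast
qed

lemma sqrt_frac_near_0_poly_mult:
  assumes "sqrt_frac_near_0 n h"
  shows "sqrt_frac_near_0 n (\<lambda>z. poly p z * h z)"
  using sqrt_frac_near_0_mult[OF sqrt_frac_near_0_poly[of 0 p] assms] by simp

lemma sqrt_frac_near_0_sum:
  assumes "finite I" "\<And>i. i \<in> I \<Longrightarrow> sqrt_frac_near_0 n (h i)"
  shows "sqrt_frac_near_0 n (\<lambda>z. \<Sum>i\<in>I. h i z)"
  using assms
proof (induction I rule: finite_induct)
  case empty
  show ?case unfolding sqrt_frac_near_0_def
    by (rule exI[of _ 0], rule exI[of _ 0]) (simp add: sqrt_frac_zero)
next
  case (insert i I)
  then show ?case by (simp add: sqrt_frac_near_0_add)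
qed

definition derivs_sqrt_frac :: "nat \<Rightarrow> (nat \<Rightarrow> nat) \<Rightarrow> (complex \<Rightarrow> complex \<Rightarrow> complex) \<Rightarrow> bool" where
  "derivs_sqrt_frac N ex F \<longleftrightarrow> (\<forall>\<^sub>F z in nhds 0. F z analytic_on {0}) \<and>
     (\<forall>j\<le>N. sqrt_frac_near_0 (ex j) (\<lambda>z. (deriv ^^ j) (F z) 0))"

lemma derivs_sqrt_frac_le:
  assumes "derivs_sqrt_frac M ex F" "N \<le> M"
  shows "derivs_sqrt_frac N ex F"
  using assms unfolding derivs_sqrt_frac_def by auto

lemma derivs_sqrt_frac_eval2: "derivs_sqrt_frac N ex (\<lambda>z y. eval2 P z y)"
  unfolding derivs_sqrt_frac_def higher_deriv_eval2 eval2_at_0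
  by (simp add: analytic_on_eval2 sqrt_frac_near_0_poly)

lemma derivs_sqrt_frac_cong:
  assumes "derivs_sqrt_frac N ex F" "\<forall>\<^sub>F z in nhds 0. \<forall>\<^sub>F y in nhds 0. F z y = G z y"
  shows "derivs_sqrt_frac N ex G"
  unfolding derivs_sqrt_frac_def
proof (intro conjI allI impI)
  have F: "\<forall>\<^sub>F z in nhds 0. F z analytic_on {0}"
    using assms(1) unfolding derivs_sqrt_frac_def by blast
  with assms(2) show "\<forall>\<^sub>F z in nhds 0. G z analytic_on {0}"
    by eventually_elim (use analytic_at_cong in blast)
  fix j assume "j \<le> N"
  with assms(1) have "sqrt_frac_near_0 (ex j) (\<lambda>z. (deriv ^^ j) (F z) 0)"
    unfolding derivs_sqrt_frac_def by blast
  moreover from assms(2) have "\<forall>\<^sub>F z in nhds 0. (deriv ^^ j) (F z) 0 = (deriv ^^ j) (G z) 0"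
    by eventually_elim (simp add: higher_deriv_cong_ev)
  ultimately show "sqrt_frac_near_0 (ex j) (\<lambda>z. (deriv ^^ j) (G z) 0)"
    by (rule sqrt_frac_near_0_cong)
qed

lemma derivs_sqrt_frac_add:
  assumes "derivs_sqrt_frac N ex F" "derivs_sqrt_frac N ex G"
  shows "derivs_sqrt_frac N ex (\<lambda>z y. F z y + G z y)"
  unfolding derivs_sqrt_frac_def
proof (intro conjI allI impI)
  have an: "\<forall>\<^sub>F z in nhds 0. F z analytic_on {0} \<and> G z analytic_on {0}"
    using assms unfolding derivs_sqrt_frac_def by (simp add: eventually_conj_iff)
  then show "\<forall>\<^sub>F z in nhds 0. (\<lambda>y. F z y + G z y) analytic_on {0}"
    by eventually_elim (simp add: analytic_on_add)
  fix j assume "j \<le> N"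
  with assms have "sqrt_frac_near_0 (ex j) (\<lambda>z. (deriv ^^ j) (F z) 0 + (deriv ^^ j) (G z) 0)"
    unfolding derivs_sqrt_frac_def by (simp add: sqrt_frac_near_0_add)
  moreover from an have "\<forall>\<^sub>F z in nhds 0.
      (deriv ^^ j) (F z) 0 + (deriv ^^ j) (G z) 0 = (deriv ^^ j) (\<lambda>y. F z y + G z y) 0"
    by eventually_elim (simp add: higher_deriv_add_at)
  ultimately show "sqrt_frac_near_0 (ex j) (\<lambda>z. (deriv ^^ j) (\<lambda>y. F z y + G z y) 0)"
    by (rule sqrt_frac_near_0_cong)
qed

lemma derivs_sqrt_frac_poly_mult:
  assumes "derivs_sqrt_frac N ex F"
  shows "derivs_sqrt_frac N ex (\<lambda>z y. poly p z * F z y)"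
  unfolding derivs_sqrt_frac_def
proof (intro conjI allI impI)
  have an: "\<forall>\<^sub>F z in nhds 0. F z analytic_on {0}"
    using assms unfolding derivs_sqrt_frac_def by blast
  then show "\<forall>\<^sub>F z in nhds 0. (\<lambda>y. poly p z * F z y) analytic_on {0}"
    by eventually_elim (simp add: analytic_on_mult)
  fix j assume "j \<le> N"
  with assms have "sqrt_frac_near_0 (ex j) (\<lambda>z. poly p z * (deriv ^^ j) (F z) 0)"
    unfolding derivs_sqrt_frac_def by (simp add: sqrt_frac_near_0_poly_mult)
  moreover from an have "\<forall>\<^sub>F z in nhds 0.
      poly p z * (deriv ^^ j) (F z) 0 = (deriv ^^ j) (\<lambda>y. poly p z * F z y) 0"
    by eventually_elim (simp add: higher_deriv_cmult')
  ultimately show "sqrt_frac_near_0 (ex j) (\<lambda>z. (deriv ^^ j) (\<lambda>y. poly p z * F z y) 0)"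
    by (rule sqrt_frac_near_0_cong)
qed

lemma derivs_sqrt_frac_uminus:
  assumes "derivs_sqrt_frac N ex F"
  shows "derivs_sqrt_frac N ex (\<lambda>z y. - F z y)"
  using derivs_sqrt_frac_poly_mult[OF assms, of "-1"] by simp

lemma derivs_sqrt_frac_diff:
  assumes "derivs_sqrt_frac N ex F" "derivs_sqrt_frac N ex G"
  shows "derivs_sqrt_frac N ex (\<lambda>z y. F z y - G z y)"
  using derivs_sqrt_frac_add[OF assms(1) derivs_sqrt_frac_uminus[OF assms(2)]] by simp

lemma derivs_sqrt_frac_mult:
  assumes F: "derivs_sqrt_frac N exF F" and G: "derivs_sqrt_frac N exG G"
    and ex: "\<And>i j. i \<le> j \<Longrightarrow> j \<le> N \<Longrightarrow> exF i + exG (j - i) \<le> exH j"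
  shows "derivs_sqrt_frac N exH (\<lambda>z y. F z y * G z y)"
  unfolding derivs_sqrt_frac_def
proof (intro conjI allI impI)
  have an: "\<forall>\<^sub>F z in nhds 0. F z analytic_on {0} \<and> G z analytic_on {0}"
    using F G unfolding derivs_sqrt_frac_def by (simp add: eventually_conj_iff)
  then show "\<forall>\<^sub>F z in nhds 0. (\<lambda>y. F z y * G z y) analytic_on {0}"
    by eventually_elim (simp add: analytic_on_mult)
  fix j assume j: "j \<le> N"
  have "sqrt_frac_near_0 (exH j) (\<lambda>z. of_nat (j choose i) * (deriv ^^ i) (F z) 0 * (deriv ^^ (j - i)) (G z) 0)"
    if "i \<in> {0..j}" for i
  proof -
    have "sqrt_frac_near_0 (exF i + exG (j - i)) (\<lambda>z. (deriv ^^ i) (F z) 0 * (deriv ^^ (j - i)) (G z) 0)"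
      using F G that j unfolding derivs_sqrt_frac_def by (simp add: sqrt_frac_near_0_mult)
    then have "sqrt_frac_near_0 (exH j) (\<lambda>z. (deriv ^^ i) (F z) 0 * (deriv ^^ (j - i)) (G z) 0)"
      using ex[of i j] that j by (auto elim: sqrt_frac_near_0_mono)
    then show ?thesis
      using sqrt_frac_near_0_poly_mult[where p = "[:of_nat (j choose i):]"] by (simp add: mult.assoc)
  qed
  then have "sqrt_frac_near_0 (exH j)
      (\<lambda>z. \<Sum>i = 0..j. of_nat (j choose i) * (deriv ^^ i) (F z) 0 * (deriv ^^ (j - i)) (G z) 0)"
    by (rule sqrt_frac_near_0_sum[OF finite_atLeastAtMost])
  moreover from an have "\<forall>\<^sub>F z in nhds 0.
      (\<Sum>i = 0..j. of_nat (j choose i) * (deriv ^^ i) (F z) 0 * (deriv ^^ (j - i)) (G z) 0) =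
      (deriv ^^ j) (\<lambda>y. F z y * G z y) 0"
    by eventually_elim (simp add: higher_deriv_mult_at)
  ultimately show "sqrt_frac_near_0 (exH j) (\<lambda>z. (deriv ^^ j) (\<lambda>y. F z y * G z y) 0)"
    by (rule sqrt_frac_near_0_cong)
qed

lemma derivs_sqrt_frac_0:
  assumes "\<forall>\<^sub>F z in nhds 0. \<forall>\<^sub>F y in nhds 0. (F z has_field_derivative F' z y) (at y)"
    and "sqrt_frac_near_0 (ex 0) (\<lambda>z. F z 0)"
  shows "derivs_sqrt_frac 0 ex F"
  using assms unfolding derivs_sqrt_frac_def
  by (auto elim: eventually_mono intro: analytic_at_if_eventually_has_derivative)

lemma derivs_sqrt_frac_Suc:
  assumes D: "\<forall>\<^sub>F z in nhds 0. \<forall>\<^sub>F y in nhds 0. (F z has_field_derivative F' z y) (at y)"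
    and F0: "sqrt_frac_near_0 (ex 0) (\<lambda>z. F z 0)"
    and F': "derivs_sqrt_frac N ex' F'"
    and ex: "\<And>j. j \<le> N \<Longrightarrow> ex' j \<le> ex (Suc j)"
  shows "derivs_sqrt_frac (Suc N) ex F"
  unfolding derivs_sqrt_frac_def
proof (intro conjI allI impI)
  show "\<forall>\<^sub>F z in nhds 0. F z analytic_on {0}"
    using derivs_sqrt_frac_0[of F F' ex, OF D F0] unfolding derivs_sqrt_frac_def by blast
  fix j assume j: "j \<le> Suc N"
  show "sqrt_frac_near_0 (ex j) (\<lambda>z. (deriv ^^ j) (F z) 0)"
  proof (cases j)
    case 0
    with F0 show ?thesis by simp
  next
    case (Suc k)
    with F' j ex[of k] have "sqrt_frac_near_0 (ex j) (\<lambda>z. (deriv ^^ k) (F' z) 0)"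
      unfolding derivs_sqrt_frac_def by (auto elim: sqrt_frac_near_0_mono)
    moreover from D have "\<forall>\<^sub>F z in nhds 0. (deriv ^^ k) (F' z) 0 = (deriv ^^ j) (F z) 0"
    proof eventually_elim
      case (elim z)
      then have "\<forall>\<^sub>F y in nhds 0. F' z y = deriv (F z) y"
        by eventually_elim (simp add: DERIV_imp_deriv)
      then show ?case
        unfolding Suc funpow_Suc_right by (simp add: higher_deriv_cong_ev)
    qed
    ultimately show ?thesis by (rule sqrt_frac_near_0_cong)
  qed
qed

lemma sqrt_frac_near_0_sqrt_w: "sqrt_frac_near_0 0 sqrt_w"
  unfolding sqrt_frac_near_0_def by (rule exI[of _ 0], rule exI[of _ 1]) (simp add: sqrt_frac_def)

lemma sqrt_frac_near_0_inverse_sqrt_w: "sqrt_frac_near_0 1 (\<lambda>z. 1 / sqrt_w z)"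
  unfolding sqrt_frac_near_0_def by (rule exI[of _ 1], rule exI[of _ 0]) (simp add: sqrt_frac_def)

lemma derivs_sqrt_frac_inverse:
  assumes D: "\<forall>\<^sub>F z in nhds 0. \<forall>\<^sub>F y in nhds 0. (F z has_field_derivative F' z y) (at y)"
    and F': "\<And>N. derivs_sqrt_frac N (\<lambda>j. 2*j+1) F'"
    and F0: "\<forall>\<^sub>F z in nhds 0. F z 0 = sqrt_w z"
  shows "derivs_sqrt_frac N (\<lambda>j. 2*j+1) (\<lambda>z y. 1 / F z y)"
proof -
  have D_inverse: "\<forall>\<^sub>F z in nhds 0. \<forall>\<^sub>F y in nhds 0.
      ((\<lambda>y. 1 / F z y) has_field_derivative - (F' z y * (1 / F z y * (1 / F z y)))) (at y)"
    using D F0 eventually_sqrt_w_nonzero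
  proof eventually_elim
    case (elim z)
    then have "isCont (F z) 0"
      by (auto dest: eventually_nhds_x_imp_x DERIV_isCont)
    with elim have "\<forall>\<^sub>F y in nhds 0. F z y \<noteq> 0"
      by (intro eventually_nonzero_nhds) auto
    with elim(1) show ?case
    proof eventually_elim
      case (elim y)
      show ?case
        by (rule DERIV_cong[OF DERIV_divide[OF DERIV_const[of 1 "at y"] elim]]) (simp add: field_simps)
    qed
  qed
  have "sqrt_frac_near_0 1 (\<lambda>z. 1 / F z 0)"
    using sqrt_frac_near_0_inverse_sqrt_w
    by (rule sqrt_frac_near_0_cong) (use F0 in \<open>auto elim: eventually_mono\<close>)
  then have base: "sqrt_frac_near_0 ((\<lambda>j. 2*j+1) 0) (\<lambda>z. 1 / F z 0)"
    by simp
  show ?thesis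
  proof (induction N)
    case 0
    show ?case by (rule derivs_sqrt_frac_0[where ex = "\<lambda>j. 2*j+1", OF D_inverse base])
  next
    case (Suc N)
    have "derivs_sqrt_frac N (\<lambda>j. 2*j+2) (\<lambda>z y. 1 / F z y * (1 / F z y))"
      by (rule derivs_sqrt_frac_mult[OF Suc Suc]) auto
    then have "derivs_sqrt_frac N (\<lambda>j. 2*j+3) (\<lambda>z y. F' z y * (1 / F z y * (1 / F z y)))"
      by (rule derivs_sqrt_frac_mult[OF F']) auto
    then show ?case
      by (intro derivs_sqrt_frac_Suc[where ex = "\<lambda>j. 2*j+1", OF D_inverse base] derivs_sqrt_frac_uminus) auto
  qed
qed

end

interpretation sqrt_of_poly "[:1, 0, -2:]"
  by unfold_locales simp

lemma sqrt_w_eq: "sqrt_w z = csqrt (1 - 2*z^2)"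
  by (simp add: sqrt_w_def algebra_simps power2_eq_square)

definition disc :: "complex \<Rightarrow> complex \<Rightarrow> complex" where
  "disc z y = 1 - 2*z^2 - 4*y*z^3"

lemma csqrt_disc_0: "csqrt (disc z 0) = sqrt_w z"
  by (simp add: disc_def sqrt_w_eq)

lemma eventually_near_origin:
  fixes P :: "complex \<Rightarrow> complex \<Rightarrow> bool"
  assumes "\<And>z y. norm z < 1/4 \<Longrightarrow> norm y < 1 \<Longrightarrow> P z y"
  shows "\<forall>\<^sub>F z in nhds 0. \<forall>\<^sub>F y in nhds 0. P z y"
proof -
  have small: "\<forall>\<^sub>F x in nhds (0::complex). norm x < r" if "r > 0" for r
    using eventually_nhds_ball[OF that, of 0] by (auto simp: dist_norm elim: eventually_mono)
  have y_small: "\<forall>\<^sub>F y in nhds (0::complex). norm y < 1"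
    by (rule small) simp
  have "\<forall>\<^sub>F y in nhds 0. P z y" if "norm z < 1/4" for z
    using y_small by (rule eventually_mono) (rule assms[OF that])
  moreover have "\<forall>\<^sub>F z in nhds (0::complex). norm z < 1/4"
    by (rule small) simp
  ultimately show ?thesis
    by (auto elim: eventually_mono)
qed

lemma Re_disc_pos:
  assumes z: "norm z < 1/4" and y: "norm y < 1"
  shows "Re (disc z y) > 0"
proof -
  have "norm z ^ 2 \<le> (1/4)^2" "norm z ^ 3 \<le> (1/4)^3"
    using z by (intro power_mono; simp)+
  moreover have "norm y * norm z ^ 3 \<le> norm z ^ 3"
    using y by (simp add: mult_left_le_one_le)
  ultimately have "norm (2*z^2) + norm (4*y*z^3) < 1"
    by (simp add: norm_mult norm_power power_divide)
  then have "norm (2*z^2 + 4*y*z^3) < 1"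
    using norm_triangle_ineq[of "2*z^2" "4*y*z^3"] by linarith
  then have "Re (2*z^2 + 4*y*z^3) < 1"
    using complex_Re_le_cmod[of "2*z^2 + 4*y*z^3"] by linarith
  then show ?thesis by (simp add: disc_def)
qed

lemma denom_nonzero:
  fixes y z :: complex
  assumes "norm z < 1/4" "norm y < 1"
  shows "1 + 2*y*z \<noteq> 0"
proof
  assume "1 + 2*y*z = 0"
  then have "norm (2*y*z) = 1" by (simp add: add_eq_0_iff)
  moreover have "norm y * norm z \<le> 1 * (1/4)"
    using assms by (intro mult_mono) auto
  ultimately show False by (simp add: norm_mult)
qed

lemma has_field_derivative_csqrt_disc:
  fixes y z :: complex
  assumes "norm z < 1/4" "norm y < 1"
  shows "((\<lambda>y. csqrt (disc z y)) has_field_derivative poly (monom (-2) 3) z * (1 / csqrt (disc z y))) (at y)"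
proof -
  have "((\<lambda>y. disc z y) has_field_derivative - 4 * z^3) (at y)"
    unfolding disc_def by (auto intro!: derivative_eq_intros)
  moreover have "disc z y \<notin> \<real>\<^sub>\<le>\<^sub>0"
    using Re_disc_pos[OF assms] by (auto simp: complex_nonpos_Reals_iff)
  ultimately show ?thesis
    by (rule DERIV_cong[OF has_field_derivative_csqrt']) (simp add: poly_monom field_simps)
qed

lemma has_field_derivative_inverse_csqrt_disc:
  fixes y z :: complex
  assumes "norm z < 1/4" "norm y < 1"
  shows "((\<lambda>y. 1 / csqrt (disc z y)) has_field_derivative
    poly (monom 2 3) z * (1 / csqrt (disc z y) * (1 / csqrt (disc z y) * (1 / csqrt (disc z y))))) (at y)"
proof -
  have "csqrt (disc z y) \<noteq> 0"
    using Re_disc_pos[OF assms] by auto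
  then show ?thesis
    by (rule DERIV_cong[OF DERIV_divide[OF DERIV_const has_field_derivative_csqrt_disc[OF assms]]])
      (simp add: poly_monom field_simps)
qed

lemma has_field_derivative_inverse_denom:
  fixes y z :: complex
  assumes "norm z < 1/4" "norm y < 1"
  shows "((\<lambda>y. 1 / (1 + 2*y*z)) has_field_derivative
    poly [:0, -2:] z * (1 / (1 + 2*y*z) * (1 / (1 + 2*y*z)))) (at y)"
proof -
  have "((\<lambda>y. 1 + 2*y*z) has_field_derivative 2*z) (at y)"
    by (auto intro!: derivative_eq_intros)
  from DERIV_divide[OF DERIV_const this denom_nonzero[OF assms]] show ?thesis
    by (rule DERIV_cong) (simp add: field_simps)
qed

lemma derivs_inverse_csqrt_disc: "derivs_sqrt_frac N (\<lambda>j. 2*j+1) (\<lambda>z y. 1 / csqrt (disc z y))"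
proof (induction N)
  case 0
  show ?case
    by (rule derivs_sqrt_frac_0[OF eventually_near_origin],
        (rule has_field_derivative_inverse_csqrt_disc; assumption))
      (use sqrt_frac_near_0_inverse_sqrt_w in \<open>simp add: csqrt_disc_0\<close>)
next
  case (Suc N)
  have "derivs_sqrt_frac N (\<lambda>j. 2*j+2) (\<lambda>z y. 1 / csqrt (disc z y) * (1 / csqrt (disc z y)))"
    by (rule derivs_sqrt_frac_mult[OF Suc Suc]) auto
  then have cube: "derivs_sqrt_frac N (\<lambda>j. 2*j+3)
      (\<lambda>z y. 1 / csqrt (disc z y) * (1 / csqrt (disc z y) * (1 / csqrt (disc z y))))"
    by (rule derivs_sqrt_frac_mult[OF Suc]) auto
  show ?case
    by (rule derivs_sqrt_frac_Suc[OF eventually_near_origin],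
        (rule has_field_derivative_inverse_csqrt_disc; assumption),
        use sqrt_frac_near_0_inverse_sqrt_w in \<open>simp add: csqrt_disc_0\<close>,
        rule derivs_sqrt_frac_poly_mult[OF cube]) auto
qed

lemma derivs_csqrt_disc: "derivs_sqrt_frac N (\<lambda>j. 2*j-1) (\<lambda>z y. csqrt (disc z y))"
proof -
  have "derivs_sqrt_frac (Suc N) (\<lambda>j. 2*j-1) (\<lambda>z y. csqrt (disc z y))"
    by (rule derivs_sqrt_frac_Suc[OF eventually_near_origin],
        (rule has_field_derivative_csqrt_disc; assumption),
        simp add: csqrt_disc_0 sqrt_frac_near_0_sqrt_w,
        rule derivs_sqrt_frac_poly_mult[OF derivs_inverse_csqrt_disc]) auto
  then show ?thesis
    by (rule derivs_sqrt_frac_le) simp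
qed

lemma derivs_inverse_denom: "derivs_sqrt_frac N (\<lambda>_. 0) (\<lambda>z y. 1 / (1 + 2*y*z))"
proof (induction N)
  case 0
  show ?case
    by (rule derivs_sqrt_frac_0[OF eventually_near_origin],
        (rule has_field_derivative_inverse_denom; assumption))
      (simp add: sqrt_frac_near_0_const)
next
  case (Suc N)
  have square: "derivs_sqrt_frac N (\<lambda>_. 0) (\<lambda>z y. 1 / (1 + 2*y*z) * (1 / (1 + 2*y*z)))"
    by (rule derivs_sqrt_frac_mult[OF Suc Suc]) auto
  show ?case
    by (rule derivs_sqrt_frac_Suc[OF eventually_near_origin],
        (rule has_field_derivative_inverse_denom; assumption),
        simp add: sqrt_frac_near_0_const,
        rule derivs_sqrt_frac_poly_mult[OF square]) auto
qed

lemma derivs_GG: "derivs_sqrt_frac N (\<lambda>j. 2*j-1) (GG a b)"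
proof -
  have a_part: "derivs_sqrt_frac N (\<lambda>j. 2*j-1) (\<lambda>z y. eval2 a z y * (1 / (1 + 2*y*z)))"
    by (rule derivs_sqrt_frac_mult[OF derivs_sqrt_frac_eval2[where ex = "\<lambda>_. 0"] derivs_inverse_denom])
      auto
  have "derivs_sqrt_frac N (\<lambda>j. 2*j-1) (\<lambda>z y. csqrt (disc z y) * (1 / (1 + 2*y*z)))"
    by (rule derivs_sqrt_frac_mult[OF derivs_csqrt_disc derivs_inverse_denom]) auto
  then have b_part: "derivs_sqrt_frac N (\<lambda>j. 2*j-1)
      (\<lambda>z y. eval2 b z y * (csqrt (disc z y) * (1 / (1 + 2*y*z))))"
    by (rule derivs_sqrt_frac_mult[OF derivs_sqrt_frac_eval2[where ex = "\<lambda>_. 0"]]) auto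
  have "GG a b = (\<lambda>z y. eval2 a z y * (1 / (1 + 2*y*z)) -
      eval2 b z y * (csqrt (disc z y) * (1 / (1 + 2*y*z))))"
    by (simp add: fun_eq_iff GG_def disc_def diff_divide_distrib)
  then show ?thesis
    using derivs_sqrt_frac_diff[OF a_part b_part] by simp
qed

definition numer_one_minus_GG :: "complex poly poly \<Rightarrow> complex poly poly \<Rightarrow> complex \<Rightarrow> complex \<Rightarrow> complex" where
  "numer_one_minus_GG a b z y = eval2 ([:1, [:0, 2:]:] - a) z y + eval2 b z y * csqrt (disc z y)"

lemma eval2_denom: "eval2 [:1, [:0, 2:]:] z y = 1 + 2*y*z"
  by (simp add: eval2_def map_poly_pCons algebra_simps)

lemma one_minus_GG:
  assumes "1 + 2*y*z \<noteq> 0"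
  shows "1 - GG a b z y = numer_one_minus_GG a b z y / (1 + 2*y*z)"
  using assms
  by (simp add: GG_def numer_one_minus_GG_def eval2_diff eval2_denom disc_def field_simps)

lemma numer_one_minus_GG_0:
  assumes "\<And>z. eval2 a z 0 = 1" and "\<And>z. eval2 b z 0 = 1"
  shows "numer_one_minus_GG a b z 0 = sqrt_w z"
  using assms by (simp add: numer_one_minus_GG_def eval2_diff eval2_denom csqrt_disc_0)

lemma has_field_derivative_numer_one_minus_GG:
  fixes y z :: complex
  assumes "norm z < 1/4" "norm y < 1"
  shows "(numer_one_minus_GG a b z has_field_derivative
    eval2 (pderiv ([:1, [:0, 2:]:] - a)) z y + (eval2 (pderiv b) z y * csqrt (disc z y) +
      eval2 b z y * (poly (monom (-2) 3) z * (1 / csqrt (disc z y))))) (at y)"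
  unfolding numer_one_minus_GG_def[abs_def]
  by (rule DERIV_cong[OF DERIV_add[OF has_field_derivative_eval2
        DERIV_mult[OF has_field_derivative_eval2 has_field_derivative_csqrt_disc[OF assms]]]])
    (simp add: algebra_simps)

lemma derivs_deriv_numer_one_minus_GG:
  "derivs_sqrt_frac N (\<lambda>j. 2*j+1) (\<lambda>z y. eval2 (pderiv ([:1, [:0, 2:]:] - a)) z y +
    (eval2 (pderiv b) z y * csqrt (disc z y) +
      eval2 b z y * (poly (monom (-2) 3) z * (1 / csqrt (disc z y)))))"
proof -
  have "derivs_sqrt_frac N (\<lambda>j. 2*j+1) (\<lambda>z y. eval2 (pderiv b) z y * csqrt (disc z y))"
    by (rule derivs_sqrt_frac_mult[OF derivs_sqrt_frac_eval2[where ex = "\<lambda>_. 0"] derivs_csqrt_disc])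
      auto
  moreover have "derivs_sqrt_frac N (\<lambda>j. 2*j+1)
      (\<lambda>z y. eval2 b z y * (poly (monom (-2) 3) z * (1 / csqrt (disc z y))))"
    by (rule derivs_sqrt_frac_mult[OF derivs_sqrt_frac_eval2[where ex = "\<lambda>_. 0"]
          derivs_sqrt_frac_poly_mult[OF derivs_inverse_csqrt_disc]]) auto
  ultimately show ?thesis
    by (intro derivs_sqrt_frac_add derivs_sqrt_frac_eval2)
qed

lemma derivs_inverse_one_minus_GG:
  assumes "\<And>z. eval2 a z 0 = 1" and "\<And>z. eval2 b z 0 = 1"
  shows "derivs_sqrt_frac N (\<lambda>j. 2*j+1) (\<lambda>z y. 1 / (1 - GG a b z y))"
proof (rule derivs_sqrt_frac_cong)
  have "derivs_sqrt_frac N (\<lambda>j. 2*j+1) (\<lambda>z y. 1 / numer_one_minus_GG a b z y)"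
    by (rule derivs_sqrt_frac_inverse[OF eventually_near_origin derivs_deriv_numer_one_minus_GG],
        (rule has_field_derivative_numer_one_minus_GG; assumption))
      (simp add: numer_one_minus_GG_0[OF assms])
  then show "derivs_sqrt_frac N (\<lambda>j. 2*j+1)
      (\<lambda>z y. eval2 [:1, [:0, 2:]:] z y * (1 / numer_one_minus_GG a b z y))"
    by (rule derivs_sqrt_frac_mult[OF derivs_sqrt_frac_eval2[where ex = "\<lambda>_. 0"]]) auto
  show "\<forall>\<^sub>F z in nhds 0. \<forall>\<^sub>F y in nhds 0.
      eval2 [:1, [:0, 2:]:] z y * (1 / numer_one_minus_GG a b z y) = 1 / (1 - GG a b z y)"
    by (rule eventually_near_origin) (simp add: eval2_denom one_minus_GG denom_nonzero)
qed

lemma csqrt_power_eq_powr: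
  fixes u :: complex
  assumes "u \<noteq> 0"
  shows "csqrt u ^ n = u powr (of_nat n / 2)"
proof -
  have "csqrt u ^ n = exp (Ln u / 2) ^ n"
    using assms by (simp add: csqrt_exp_Ln)
  also have "\<dots> = exp (of_nat n * (Ln u / 2))"
    by (rule exp_of_nat_mult[symmetric])
  also have "\<dots> = u powr (of_nat n / 2)"
    using assms by (simp add: powr_def)
  finally show ?thesis .
qed

lemma sqrt_frac_near_0_powr_form:
  assumes "sqrt_frac_near_0 n h"
  shows "\<exists>c d. \<forall>\<^sub>F z in nhds 0.
    h z = (poly c z - poly d z * csqrt (1 - 2*z^2)) / (1 - 2*z^2) powr (of_nat n / 2)"
proof -
  obtain e f where "\<forall>\<^sub>F z in nhds 0. h z = sqrt_frac n e f z"
    using assms unfolding sqrt_frac_near_0_def by blast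
  with eventually_sqrt_w_nonzero have "\<forall>\<^sub>F z in nhds 0.
      h z = (poly e z - poly (-f) z * csqrt (1 - 2*z^2)) / (1 - 2*z^2) powr (of_nat n / 2)"
    by eventually_elim (simp add: sqrt_frac_def sqrt_w_eq csqrt_power_eq_powr)
  then show ?thesis by blast
qed

theorem lemma1:
  fixes a b :: "complex poly poly"
  assumes "\<And>z. eval2 a z 0 = 1" and "\<And>z. eval2 b z 0 = 1"
  shows "(\<forall>l::nat. l \<ge> 1 \<longrightarrow> (\<exists>c d :: complex poly. \<forall>\<^sub>F z in nhds 0.
            (deriv ^^ l) (\<lambda>y. GG a b z y) 0 =
            (poly c z - poly d z * csqrt (1 - 2*z^2)) / ((1 - 2*z^2) powr (of_nat l - 1/2))))
       \<and> (\<forall>l::nat. \<exists>e f :: complex poly. \<forall>\<^sub>F z in nhds 0.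
            (deriv ^^ l) (\<lambda>y. 1 / (1 - GG a b z y)) 0 =
            (poly e z - poly f z * csqrt (1 - 2*z^2)) / ((1 - 2*z^2) powr (of_nat l + 1/2)))"
proof (intro conjI allI impI)
  fix l :: nat
  assume "l \<ge> 1"
  then have exponent: "of_nat (2*l-1) / 2 = (of_nat l - 1/2 :: complex)"
    by (simp add: of_nat_diff field_simps)
  have "sqrt_frac_near_0 (2*l-1) (\<lambda>z. (deriv ^^ l) (\<lambda>y. GG a b z y) 0)"
    using derivs_GG[of l a b] unfolding derivs_sqrt_frac_def by simp
  from sqrt_frac_near_0_powr_form[OF this]
  show "\<exists>c d :: complex poly. \<forall>\<^sub>F z in nhds 0.
      (deriv ^^ l) (\<lambda>y. GG a b z y) 0 =
      (poly c z - poly d z * csqrt (1 - 2*z^2)) / ((1 - 2*z^2) powr (of_nat l - 1/2))"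
    unfolding exponent .
next
  fix l :: nat
  have exponent: "of_nat (2*l+1) / 2 = (of_nat l + 1/2 :: complex)"
    by (simp add: field_simps)
  have "sqrt_frac_near_0 (2*l+1) (\<lambda>z. (deriv ^^ l) (\<lambda>y. 1 / (1 - GG a b z y)) 0)"
    using derivs_inverse_one_minus_GG[OF assms, of l] unfolding derivs_sqrt_frac_def by simp
  from sqrt_frac_near_0_powr_form[OF this]
  show "\<exists>e f :: complex poly. \<forall>\<^sub>F z in nhds 0.
      (deriv ^^ l) (\<lambda>y. 1 / (1 - GG a b z y)) 0 =
      (poly e z - poly f z * csqrt (1 - 2*z^2)) / ((1 - 2*z^2) powr (of_nat l + 1/2))"
    unfolding exponent .
qed

end
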